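(* If $X,Y,Z,W$ are independent real-valued continuous random variables, then $$h(X+Y+Z+W)+h(Y)+h(Z)\leq h(X+Y)+h(Y+Z)+h(Z+W).$$
   Context: Standing conventions: random variables are real-valued with densities and all differential entropies $h$ appearing exist and are finite. *)

theory Defs
  imports "HOL-Probability.Probability"
begin

definition diff_entropy :: "'a measure \<Rightarrow> ('a \<Rightarrow> real) \<Rightarrow> real" where
  "diff_entropy M V = prob_space.entropy M (exp 1) lborel V"

definition has_finite_diff_entropy :: "'a measure \<Rightarrow> ('a \<Rightarrow> real) \<Rightarrow> bool" where
  "has_finite_diff_entropy M V \<longleftrightarrow>
     (\<exists>f. distributed M lborel V f \<and> (\<forall>x. 0 \<le> f x) \<and>
          integrable lborel (\<lambda>x. f x * ln (f x)))"

end

theory Submission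
  imports Defs
begin

(* Write S = X+Y+Z+W and f_V for the density of V, so that h(V) = -E[ln f_V(V)].  The claimed
   inequality is E[ln R] <= 0 for the random ratio
       R = f_{X+Y}(X+Y) f_{Y+Z}(Y+Z) f_{Z+W}(Z+W) / (f_S(S) f_Y(Y) f_Z(Z)),
   and since ln t <= t - 1 it suffices to show E[R] <= 1 (a Gibbs-type argument).

   E[R] is an iterated integral against the joint density f_X(x) f_W(w) f_Y(y) f_Z(z).  The
   factors f_Y f_Z cancel, and after the translations a = x + y, c = z + w the inner
   (y, z)-integral becomes
       int int f_{X+Y}(a) f_{Y+Z}(a + c - x - w) f_{Z+W}(c) / f_S(a + c) da dc,
   which is at most 1 because f_{X+Y} * f_{Z+W} = f_S (X+Y and Z+W are independent) and
   f_{Y+Z} integrates to 1. *)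

section \<open>Lebesgue integrals on the real line\<close>

lemma nn_integral_lborel_translate:
  fixes f :: "real \<Rightarrow> ennreal"
  assumes [measurable]: "f \<in> borel_measurable borel"
  shows "(\<integral>\<^sup>+x. f (x + t) \<partial>lborel) = (\<integral>\<^sup>+x. f x \<partial>lborel)"
  using nn_integral_real_affine[OF assms, of 1 t] by (simp add: add.commute)

lemma nn_integral_lborel_swap:
  fixes f :: "real \<Rightarrow> real \<Rightarrow> ennreal"
  assumes "case_prod f \<in> borel_measurable (borel \<Otimes>\<^sub>M borel)"
  shows "(\<integral>\<^sup>+x. \<integral>\<^sup>+y. f x y \<partial>lborel \<partial>lborel) = (\<integral>\<^sup>+y. \<integral>\<^sup>+x. f x y \<partial>lborel \<partial>lborel)"
proof -
  have "sets (lborel \<Otimes>\<^sub>M lborel) = sets (borel \<Otimes>\<^sub>M (borel :: real measure))"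
    by (rule sets_pair_measure_cong) simp_all
  then have "case_prod f \<in> borel_measurable (lborel \<Otimes>\<^sub>M lborel)"
    using assms measurable_cong_sets by blast
  from lborel_pair.Fubini'[OF this] show ?thesis
    by simp
qed

section \<open>Densities and independence\<close>

lemma (in prob_space) distributed_total_mass:
  assumes "distributed M lborel V f"
  shows "(\<integral>\<^sup>+x. f x \<partial>lborel) = 1"
  using distributed_emeasure[OF assms, of UNIV] by (simp add: emeasure_space_1)

lemma (in prob_space) nn_integral_indep_vars4:
  fixes V :: "'i \<Rightarrow> 'a \<Rightarrow> real" and F :: "real \<times> real \<times> real \<times> real \<Rightarrow> ennreal"
  assumes indep: "indep_vars (\<lambda>_. borel) V {i, j, k, l}" and distinct: "distinct [i, j, k, l]"
    and dens: "distributed M lborel (V i) fi" "distributed M lborel (V j) fj"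
      "distributed M lborel (V k) fk" "distributed M lborel (V l) fl"
    and [measurable]: "F \<in> borel_measurable (borel \<Otimes>\<^sub>M borel \<Otimes>\<^sub>M borel \<Otimes>\<^sub>M borel)"
  shows "(\<integral>\<^sup>+\<omega>. F (V i \<omega>, V j \<omega>, V k \<omega>, V l \<omega>) \<partial>M) =
    (\<integral>\<^sup>+a. fi a * (\<integral>\<^sup>+b. fj b * (\<integral>\<^sup>+c. fk c * (\<integral>\<^sup>+d. fl d * F (a, b, c, d)
       \<partial>lborel) \<partial>lborel) \<partial>lborel) \<partial>lborel)"
proof -
  define I where "I = {i, j, k, l}"
  define N where "N n = (if n \<in> I then distr M borel (V n) else lborel)" for n
  have rv[measurable]: "V n \<in> borel_measurable M" if "n \<in> I" for n
    using indep that unfolding I_def indep_vars_def by auto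
  have [measurable_cong]: "sets (N n) = sets borel" for n
    by (simp add: N_def)
  interpret N: product_sigma_finite N
    unfolding product_sigma_finite_def N_def
    by (auto intro!: prob_space_imp_sigma_finite prob_space_distr rv
        simp: lborel.sigma_finite_measure_axioms)
  have joint: "distr M (\<Pi>\<^sub>M n\<in>I. borel) (\<lambda>\<omega>. \<lambda>n\<in>I. V n \<omega>) = (\<Pi>\<^sub>M n\<in>I. N n)"
    using indep_vars_iff_distr_eq_PiM'[where I = I and M' = "\<lambda>_. borel" and X = V] indep rv
    by (auto simp: I_def N_def intro!: PiM_cong)
  have marginal: "N n = density lborel f" if "n \<in> I" "distributed M lborel (V n) f" for n f
    using that unfolding N_def distributed_def by (auto cong: distr_cong)
  have "(\<integral>\<^sup>+\<omega>. F (V i \<omega>, V j \<omega>, V k \<omega>, V l \<omega>) \<partial>M)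
      = (\<integral>\<^sup>+v. F (v i, v j, v k, v l) \<partial>distr M (\<Pi>\<^sub>M n\<in>I. borel) (\<lambda>\<omega>. \<lambda>n\<in>I. V n \<omega>))"
    by (subst nn_integral_distr) (auto simp: I_def intro!: measurable_restrict)
  also have "\<dots> = (\<integral>\<^sup>+v. F (v i, v j, v k, v l) \<partial>(\<Pi>\<^sub>M n\<in>insert i (insert j (insert k {l})). N n))"
    using joint by (simp add: I_def)
  also have "\<dots> = (\<integral>\<^sup>+a. \<integral>\<^sup>+v. F (a, v j, v k, v l) \<partial>(\<Pi>\<^sub>M n\<in>insert j (insert k {l}). N n) \<partial>N i)"
    using distinct by (subst N.product_nn_integral_insert_rev) auto
  also have "\<dots> = (\<integral>\<^sup>+a. \<integral>\<^sup>+b. \<integral>\<^sup>+v. F (a, b, v k, v l) \<partial>(\<Pi>\<^sub>M n\<in>insert k {l}. N n) \<partial>N j \<partial>N i)"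
    using distinct by (subst N.product_nn_integral_insert_rev) auto
  also have "\<dots> = (\<integral>\<^sup>+a. \<integral>\<^sup>+b. \<integral>\<^sup>+c. \<integral>\<^sup>+v. F (a, b, c, v l) \<partial>(\<Pi>\<^sub>M n\<in>{l}. N n) \<partial>N k \<partial>N j \<partial>N i)"
    using distinct by (subst N.product_nn_integral_insert_rev) auto
  also have "\<dots> = (\<integral>\<^sup>+a. \<integral>\<^sup>+b. \<integral>\<^sup>+c. \<integral>\<^sup>+d. F (a, b, c, d) \<partial>N l \<partial>N k \<partial>N j \<partial>N i)"
    by (subst N.product_nn_integral_singleton) auto
  also have "\<dots> = (\<integral>\<^sup>+a. fi a * (\<integral>\<^sup>+b. fj b * (\<integral>\<^sup>+c. fk c * (\<integral>\<^sup>+d. fl d * F (a, b, c, d)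
       \<partial>lborel) \<partial>lborel) \<partial>lborel) \<partial>lborel)"
    using dens by (simp add: marginal I_def nn_integral_density distributed_borel_measurable)
  finally show ?thesis .
qed

lemma (in prob_space) indep_var_sums:
  fixes V :: "'i \<Rightarrow> 'a \<Rightarrow> real"
  assumes indep: "indep_vars (\<lambda>_. borel) V {i, j, k, l}" and distinct: "distinct [i, j, k, l]"
  shows "indep_var borel (\<lambda>\<omega>. V i \<omega> + V j \<omega>) borel (\<lambda>\<omega>. V k \<omega> + V l \<omega>)"
proof -
  have "indep_var borel ((\<lambda>v. v i + v j) \<circ> (\<lambda>\<omega>. restrict (\<lambda>n. V n \<omega>) {i, j}))
      borel ((\<lambda>v. v k + v l) \<circ> (\<lambda>\<omega>. restrict (\<lambda>n. V n \<omega>) {k, l}))"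
    using distinct by (intro indep_var_compose[OF indep_var_restrict[OF indep]]) auto
  then show ?thesis
    by (simp add: comp_def)
qed

section \<open>The analytic estimate\<close>

text \<open>If \<open>pS\<close> is the convolution of \<open>pA\<close> and \<open>pC\<close> and \<open>pB\<close> is a probability density,
  then weighting \<open>pA(a) pC(c) / pS(a + c)\<close> with any translate of \<open>pB(a + c)\<close> has mass at
  most 1: integrating over the fibres \<open>a + c = s\<close> turns the ratio into 1.\<close>
lemma convolution_ratio_integral_le_1:
  fixes pA pB pC pS :: "real \<Rightarrow> real" and t :: real
  assumes [measurable]: "pA \<in> borel_measurable borel" "pB \<in> borel_measurable borel"
      "pC \<in> borel_measurable borel" "pS \<in> borel_measurable borel"
    and nonneg: "\<And>x. 0 \<le> pA x" "\<And>x. 0 \<le> pB x" "\<And>x. 0 \<le> pC x" "\<And>x. 0 \<le> pS x"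
    and conv: "AE s in lborel. (\<integral>\<^sup>+c. ennreal (pA (s - c)) * ennreal (pC c) \<partial>lborel) = ennreal (pS s)"
    and total_B: "(\<integral>\<^sup>+s. ennreal (pB s) \<partial>lborel) = 1"
  shows "(\<integral>\<^sup>+a. \<integral>\<^sup>+c. ennreal (pA a * pB (a + c - t) * pC c / pS (a + c)) \<partial>lborel \<partial>lborel) \<le> 1"
proof -
  define q where "q s = pB (s - t) / pS s" for s
  have q_nonneg: "0 \<le> q s" for s
    unfolding q_def using nonneg by simp
  have "(\<integral>\<^sup>+a. \<integral>\<^sup>+c. ennreal (pA a * pB (a + c - t) * pC c / pS (a + c)) \<partial>lborel \<partial>lborel)
      = (\<integral>\<^sup>+c. \<integral>\<^sup>+a. ennreal (pA a * pB (a + c - t) * pC c / pS (a + c)) \<partial>lborel \<partial>lborel)"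
    by (rule nn_integral_lborel_swap) measurable
  also have "\<dots> = (\<integral>\<^sup>+c. \<integral>\<^sup>+s. ennreal (pA (s - c) * pB (s - t) * pC c / pS s) \<partial>lborel \<partial>lborel)"
  proof (rule nn_integral_cong)
    fix c :: real
    show "(\<integral>\<^sup>+a. ennreal (pA a * pB (a + c - t) * pC c / pS (a + c)) \<partial>lborel)
        = (\<integral>\<^sup>+s. ennreal (pA (s - c) * pB (s - t) * pC c / pS s) \<partial>lborel)"
      by (subst nn_integral_lborel_translate[symmetric, of _ "-c"]) (simp_all, measurable)
  qed
  also have "\<dots> = (\<integral>\<^sup>+s. \<integral>\<^sup>+c. ennreal (q s) * (ennreal (pA (s - c)) * ennreal (pC c)) \<partial>lborel \<partial>lborel)"
    by (subst nn_integral_lborel_swap)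
      (auto simp: q_def nonneg ennreal_mult[symmetric] intro!: nn_integral_cong)
  also have "\<dots> = (\<integral>\<^sup>+s. ennreal (q s) * (\<integral>\<^sup>+c. ennreal (pA (s - c)) * ennreal (pC c) \<partial>lborel) \<partial>lborel)"
    by (intro nn_integral_cong nn_integral_cmult) (simp add: q_def)
  also have "\<dots> \<le> (\<integral>\<^sup>+s. ennreal (pB (s - t)) \<partial>lborel)"
  proof (rule nn_integral_mono_AE)
    show "AE s in lborel. ennreal (q s) * (\<integral>\<^sup>+c. ennreal (pA (s - c)) * ennreal (pC c) \<partial>lborel)
        \<le> ennreal (pB (s - t))"
      using conv
    proof eventually_elim
      case (elim s)
      have "q s * pS s \<le> pB (s - t)"
        using nonneg by (cases "pS s = 0") (simp_all add: q_def)
      then show ?case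
        unfolding elim by (simp add: q_nonneg nonneg ennreal_mult[symmetric] del: ennreal_mult)
    qed
  qed
  also have "\<dots> = 1"
    using total_B nn_integral_lborel_translate[of "\<lambda>s. ennreal (pB s)" "-t"] by simp
  finally show ?thesis .
qed

lemma mult_cancel_ratio_le:
  fixes p q r :: real
  assumes "0 \<le> p" "0 \<le> q" "0 \<le> r"
  shows "p * (q * (r / (p * q))) \<le> r"
  using assms by (cases "p = 0 \<or> q = 0") auto

text \<open>For fixed \<open>x, w\<close>: weighting the ratio \<open>R\<close> with the densities \<open>pY(y) pZ(z)\<close> cancels its
  denominator factors \<open>pY(y) pZ(z)\<close>; the translations \<open>a = x + y\<close>, \<open>c = z + w\<close> then lead to
  the convolution estimate.\<close>
lemma marginal_cancellation_le_1:
  fixes pY pZ pA pB pC pS :: "real \<Rightarrow> real" and x w :: real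
  assumes [measurable]: "pY \<in> borel_measurable borel" "pZ \<in> borel_measurable borel"
      "pA \<in> borel_measurable borel" "pB \<in> borel_measurable borel"
      "pC \<in> borel_measurable borel" "pS \<in> borel_measurable borel"
    and nonneg: "\<And>x. 0 \<le> pY x" "\<And>x. 0 \<le> pZ x"
      "\<And>x. 0 \<le> pA x" "\<And>x. 0 \<le> pB x" "\<And>x. 0 \<le> pC x" "\<And>x. 0 \<le> pS x"
    and conv: "AE s in lborel. (\<integral>\<^sup>+c. ennreal (pA (s - c)) * ennreal (pC c) \<partial>lborel) = ennreal (pS s)"
    and total_B: "(\<integral>\<^sup>+s. ennreal (pB s) \<partial>lborel) = 1"
  shows "(\<integral>\<^sup>+y. ennreal (pY y) * (\<integral>\<^sup>+z. ennreal (pZ z) *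
      ennreal (pA (x + y) * pB (y + z) * pC (z + w) / (pS (x + y + z + w) * pY y * pZ z))
      \<partial>lborel) \<partial>lborel) \<le> 1"
proof -
  define g where "g y z = pA (x + y) * pB (y + z) * pC (z + w) / pS (x + y + z + w)" for y z
  have g_nonneg: "0 \<le> g y z" for y z
    unfolding g_def using nonneg by simp
  define r where "r y z = g y z / (pY y * pZ z)" for y z
  have r_nonneg: "0 \<le> r y z" for y z
    unfolding r_def using g_nonneg nonneg by simp
  have [measurable]: "r y \<in> borel_measurable borel" for y
    unfolding r_def g_def by measurable
  define h where "h a c = ennreal (pA a * pB (a + c - (x + w)) * pC c / pS (a + c))" for a c
  have [measurable]: "case_prod h \<in> borel_measurable (borel \<Otimes>\<^sub>M borel)"
    unfolding h_def by measurable
  have "(\<integral>\<^sup>+y. ennreal (pY y) * (\<integral>\<^sup>+z. ennreal (pZ z) * ennreal (r y z) \<partial>lborel) \<partial>lborel)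
      = (\<integral>\<^sup>+y. \<integral>\<^sup>+z. ennreal (pY y * (pZ z * r y z)) \<partial>lborel \<partial>lborel)"
    by (intro nn_integral_cong, subst nn_integral_cmult[symmetric])
      (auto simp: r_nonneg nonneg ennreal_mult intro!: nn_integral_cong)
  also have "\<dots> \<le> (\<integral>\<^sup>+y. \<integral>\<^sup>+z. ennreal (g y z) \<partial>lborel \<partial>lborel)"
    unfolding r_def
    by (intro nn_integral_mono ennreal_leI mult_cancel_ratio_le) (simp_all add: g_nonneg nonneg)
  also have "\<dots> = (\<integral>\<^sup>+y. \<integral>\<^sup>+z. h (y + x) (z + w) \<partial>lborel \<partial>lborel)"
    by (intro nn_integral_cong) (simp add: g_def h_def algebra_simps)
  also have "\<dots> = (\<integral>\<^sup>+y. \<integral>\<^sup>+c. h (y + x) c \<partial>lborel \<partial>lborel)"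
    by (intro nn_integral_cong nn_integral_lborel_translate) measurable
  also have "\<dots> = (\<integral>\<^sup>+a. \<integral>\<^sup>+c. h a c \<partial>lborel \<partial>lborel)"
    by (rule nn_integral_lborel_translate[where f = "\<lambda>a. \<integral>\<^sup>+c. h a c \<partial>lborel"]) measurable
  also have "\<dots> \<le> 1"
    unfolding h_def by (rule convolution_ratio_integral_le_1) (use nonneg conv total_B in simp_all)
  finally show ?thesis
    by (simp add: r_def g_def mult.assoc)
qed

lemma (in prob_space) expected_density_ratio_le_1:
  fixes X Y Z W :: "'a \<Rightarrow> real" and fX fY fZ fW fA fB fC fS :: "real \<Rightarrow> real"
  assumes indep: "indep_vars (\<lambda>_. borel) (\<lambda>i::nat. [X, Y, Z, W] ! i) {0, 1, 2, 3}"
    and dX: "distributed M lborel X fX" and dY: "distributed M lborel Y fY"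
    and dZ: "distributed M lborel Z fZ" and dW: "distributed M lborel W fW"
    and dA: "distributed M lborel (\<lambda>\<omega>. X \<omega> + Y \<omega>) fA"
    and dB: "distributed M lborel (\<lambda>\<omega>. Y \<omega> + Z \<omega>) fB"
    and dC: "distributed M lborel (\<lambda>\<omega>. Z \<omega> + W \<omega>) fC"
    and dS: "distributed M lborel (\<lambda>\<omega>. X \<omega> + Y \<omega> + Z \<omega> + W \<omega>) fS"
    and nonneg: "\<And>x. 0 \<le> fY x" "\<And>x. 0 \<le> fZ x"
      "\<And>x. 0 \<le> fA x" "\<And>x. 0 \<le> fB x" "\<And>x. 0 \<le> fC x" "\<And>x. 0 \<le> fS x"
  shows "(\<integral>\<^sup>+\<omega>. ennreal (fA (X \<omega> + Y \<omega>) * fB (Y \<omega> + Z \<omega>) * fC (Z \<omega> + W \<omega>) /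
            (fS (X \<omega> + Y \<omega> + Z \<omega> + W \<omega>) * fY (Y \<omega>) * fZ (Z \<omega>))) \<partial>M) \<le> 1"
proof -
  have [measurable]: "fY \<in> borel_measurable borel" "fZ \<in> borel_measurable borel"
    "fA \<in> borel_measurable borel" "fB \<in> borel_measurable borel"
    "fC \<in> borel_measurable borel" "fS \<in> borel_measurable borel"
    using distributed_real_measurable[OF _ dY] distributed_real_measurable[OF _ dZ]
      distributed_real_measurable[OF _ dA] distributed_real_measurable[OF _ dB]
      distributed_real_measurable[OF _ dC] distributed_real_measurable[OF _ dS] nonneg
    by auto
  define V where "V = (\<lambda>i::nat. [X, Y, Z, W] ! i)"
  define \<rho> where "\<rho> x w y z = fA (x + y) * fB (y + z) * fC (z + w) / (fS (x + y + z + w) * fY y * fZ z)"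
    for x w y z
  text \<open>The sum of the two outer pairs has density \<open>fA * fC = fS\<close>.\<close>
  have conv: "AE s in lborel. (\<integral>\<^sup>+u. ennreal (fA (s - u)) * ennreal (fC u) \<partial>lborel) = ennreal (fS s)"
  proof -
    have "indep_var borel (\<lambda>\<omega>. X \<omega> + Y \<omega>) borel (\<lambda>\<omega>. Z \<omega> + W \<omega>)"
      using indep_var_sums[of V 0 1 2 3] indep by (simp add: V_def)
    from distributed_convolution[OF this dA dC]
    have "distributed M lborel (\<lambda>\<omega>. X \<omega> + Y \<omega> + Z \<omega> + W \<omega>)
        (\<lambda>s. \<integral>\<^sup>+u. ennreal (fA (s - u)) * ennreal (fC u) \<partial>lborel)"
      by (simp add: add.assoc)
    from distributed_unique[OF this dS] show ?thesis .
  qed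
  have "(\<integral>\<^sup>+\<omega>. ennreal (fA (X \<omega> + Y \<omega>) * fB (Y \<omega> + Z \<omega>) * fC (Z \<omega> + W \<omega>) /
            (fS (X \<omega> + Y \<omega> + Z \<omega> + W \<omega>) * fY (Y \<omega>) * fZ (Z \<omega>))) \<partial>M)
      = (\<integral>\<^sup>+x. ennreal (fX x) * (\<integral>\<^sup>+w. ennreal (fW w) * (\<integral>\<^sup>+y. ennreal (fY y) *
          (\<integral>\<^sup>+z. ennreal (fZ z) * ennreal (\<rho> x w y z) \<partial>lborel) \<partial>lborel) \<partial>lborel) \<partial>lborel)"
    using nn_integral_indep_vars4[of V 0 3 1 2 _ _ _ _ "\<lambda>(x, w, y, z). ennreal (\<rho> x w y z)"]
      indep dX dW dY dZ
    by (simp add: V_def \<rho>_def insert_commute)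
  also have "\<dots> \<le> (\<integral>\<^sup>+x. ennreal (fX x) * (\<integral>\<^sup>+w. ennreal (fW w) * 1 \<partial>lborel) \<partial>lborel)"
    unfolding \<rho>_def using nonneg conv distributed_total_mass[OF dB]
    by (intro nn_integral_mono mult_left_mono marginal_cancellation_le_1) simp_all
  also have "\<dots> = 1"
    using distributed_total_mass[OF dX] distributed_total_mass[OF dW] by simp
  finally show ?thesis .
qed

section \<open>Differential entropy\<close>

text \<open>Gibbs-type inequality: if \<open>L = ln R\<close> almost surely with \<open>E[R] \<le> 1\<close>, then \<open>E[L] \<le> 0\<close>,
  because \<open>L + 1 \<le> R\<close> by \<open>ln t \<le> t - 1\<close>.\<close>
lemma (in prob_space) expectation_ln_le_0:
  assumes L: "integrable M L"
    and ln_R: "AE \<omega> in M. 0 < R \<omega> \<and> L \<omega> = ln (R \<omega>)"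
    and mass: "(\<integral>\<^sup>+\<omega>. ennreal (R \<omega>) \<partial>M) \<le> 1"
  shows "expectation L \<le> 0"
proof -
  have pos: "integrable M (\<lambda>\<omega>. max (L \<omega> + 1) 0)"
    using L by (intro integrable_max) auto
  have "AE \<omega> in M. max (L \<omega> + 1) 0 \<le> R \<omega>"
    using ln_R by eventually_elim (auto dest!: ln_le_minus_one)
  then have "ennreal (\<integral>\<omega>. max (L \<omega> + 1) 0 \<partial>M) \<le> (\<integral>\<^sup>+\<omega>. ennreal (R \<omega>) \<partial>M)"
    using pos by (subst nn_integral_eq_integral[symmetric])
      (auto elim!: eventually_mono intro!: nn_integral_mono_AE ennreal_leI)
  from order.trans[OF this mass] have "(\<integral>\<omega>. max (L \<omega> + 1) 0 \<partial>M) \<le> 1"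
    by (simp add: ennreal_le_1)
  moreover have "expectation L + 1 \<le> (\<integral>\<omega>. max (L \<omega> + 1) 0 \<partial>M)"
    using L pos integral_mono[of M "\<lambda>\<omega>. L \<omega> + 1" "\<lambda>\<omega>. max (L \<omega> + 1) 0"]
    by (simp add: prob_space)
  ultimately show ?thesis
    by simp
qed

definition density_of :: "'a measure \<Rightarrow> ('a \<Rightarrow> real) \<Rightarrow> real \<Rightarrow> real" where
  "density_of M V = (SOME f. distributed M lborel V (\<lambda>x. ennreal (f x)) \<and> (\<forall>x. 0 \<le> f x) \<and>
     integrable lborel (\<lambda>x. f x * ln (f x)))"

lemma (in prob_space) diff_entropy_density:
  assumes "has_finite_diff_entropy M V"
  shows "distributed M lborel V (\<lambda>x. ennreal (density_of M V x))"
    and "\<And>x. 0 \<le> density_of M V x"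
    and "integrable M (\<lambda>\<omega>. ln (density_of M V (V \<omega>)))"
    and "diff_entropy M V = - expectation (\<lambda>\<omega>. ln (density_of M V (V \<omega>)))"
    and "AE \<omega> in M. 0 < density_of M V (V \<omega>)"
proof -
  let ?f = "density_of M V"
  have "distributed M lborel V (\<lambda>x. ennreal (?f x)) \<and> (\<forall>x. 0 \<le> ?f x) \<and>
      integrable lborel (\<lambda>x. ?f x * ln (?f x))"
    using assms unfolding has_finite_diff_entropy_def density_of_def by (rule someI_ex)
  then have d: "distributed M lborel V (\<lambda>x. ennreal (?f x))" and nonneg: "\<And>x. 0 \<le> ?f x"
    and int: "integrable lborel (\<lambda>x. ?f x * ln (?f x))"
    by auto
  interpret information_space M "exp 1"
    by standard simp
  have [measurable]: "?f \<in> borel_measurable borel"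
    using distributed_real_measurable[OF _ d] nonneg by simp
  show "distributed M lborel V (\<lambda>x. ennreal (?f x))" "\<And>x. 0 \<le> ?f x"
    by (fact d, fact nonneg)
  show "integrable M (\<lambda>\<omega>. ln (?f (V \<omega>)))"
    using distributed_integrable[OF d, of "\<lambda>x. ln (?f x)"] int nonneg by simp
  have "diff_entropy M V = - (\<integral>x. ?f x * ln (?f x) \<partial>lborel)"
    unfolding diff_entropy_def using entropy_distr[OF d] nonneg by (simp add: log_def)
  then show "diff_entropy M V = - expectation (\<lambda>\<omega>. ln (?f (V \<omega>)))"
    using distributed_integral[OF d, of "\<lambda>x. ln (?f x)"] nonneg by simp
  show "AE \<omega> in M. 0 < ?f (V \<omega>)"
    using distributed_AE2[OF d, of "\<lambda>x. 0 < ?f x"] by simp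
qed

theorem mainTheorem13:
  fixes M :: "'a measure" and X Y Z W :: "'a \<Rightarrow> real"
  assumes "prob_space M"
    and "prob_space.indep_vars M (\<lambda>_. borel) (\<lambda>i::nat. [X, Y, Z, W] ! i) {0, 1, 2, 3}"
    and "has_finite_diff_entropy M X" and "has_finite_diff_entropy M Y"
    and "has_finite_diff_entropy M Z" and "has_finite_diff_entropy M W"
    and "has_finite_diff_entropy M (\<lambda>\<omega>. X \<omega> + Y \<omega>)"
    and "has_finite_diff_entropy M (\<lambda>\<omega>. Y \<omega> + Z \<omega>)"
    and "has_finite_diff_entropy M (\<lambda>\<omega>. Z \<omega> + W \<omega>)"
    and "has_finite_diff_entropy M (\<lambda>\<omega>. X \<omega> + Y \<omega> + Z \<omega> + W \<omega>)"
  shows "diff_entropy M (\<lambda>\<omega>. X \<omega> + Y \<omega> + Z \<omega> + W \<omega>) + diff_entropy M Y + diff_entropy M Z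
         \<le> diff_entropy M (\<lambda>\<omega>. X \<omega> + Y \<omega>) + diff_entropy M (\<lambda>\<omega>. Y \<omega> + Z \<omega>)
           + diff_entropy M (\<lambda>\<omega>. Z \<omega> + W \<omega>)"
proof -
  interpret prob_space M by fact
  define fY fZ fA fB fC fS where "fY = density_of M Y" and "fZ = density_of M Z"
    and "fA = density_of M (\<lambda>\<omega>. X \<omega> + Y \<omega>)"
    and "fB = density_of M (\<lambda>\<omega>. Y \<omega> + Z \<omega>)" and "fC = density_of M (\<lambda>\<omega>. Z \<omega> + W \<omega>)"
    and "fS = density_of M (\<lambda>\<omega>. X \<omega> + Y \<omega> + Z \<omega> + W \<omega>)"
  note hX = diff_entropy_density[OF assms(3)] and hY = diff_entropy_density[OF assms(4), folded fY_def]
    and hZ = diff_entropy_density[OF assms(5), folded fZ_def] and hW = diff_entropy_density[OF assms(6)]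
    and hA = diff_entropy_density[OF assms(7), folded fA_def]
    and hB = diff_entropy_density[OF assms(8), folded fB_def]
    and hC = diff_entropy_density[OF assms(9), folded fC_def]
    and hS = diff_entropy_density[OF assms(10), folded fS_def]
  define R where "R \<omega> = fA (X \<omega> + Y \<omega>) * fB (Y \<omega> + Z \<omega>) * fC (Z \<omega> + W \<omega>) /
    (fS (X \<omega> + Y \<omega> + Z \<omega> + W \<omega>) * fY (Y \<omega>) * fZ (Z \<omega>))" for \<omega>
  define L where "L = (\<lambda>\<omega>. ln (fA (X \<omega> + Y \<omega>)) + ln (fB (Y \<omega> + Z \<omega>)) + ln (fC (Z \<omega> + W \<omega>))
    - ln (fS (X \<omega> + Y \<omega> + Z \<omega> + W \<omega>)) - ln (fY (Y \<omega>)) - ln (fZ (Z \<omega>)))"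
  have L: "integrable M L"
    unfolding L_def using hY(3) hZ(3) hA(3) hB(3) hC(3) hS(3) by auto
  have "AE \<omega> in M. 0 < R \<omega> \<and> L \<omega> = ln (R \<omega>)"
    using hY(5) hZ(5) hA(5) hB(5) hC(5) hS(5)
    by eventually_elim (simp add: L_def R_def ln_mult ln_div)
  moreover have "(\<integral>\<^sup>+\<omega>. ennreal (R \<omega>) \<partial>M) \<le> 1"
    unfolding R_def using assms(2) hX(1) hY(1,2) hZ(1,2) hW(1) hA(1,2) hB(1,2) hC(1,2) hS(1,2)
    by (intro expected_density_ratio_le_1) auto
  ultimately have "expectation L \<le> 0"
    using L expectation_ln_le_0 by blast
  then show ?thesis
    using hY(3) hZ(3) hA(3) hB(3) hC(3) hS(3)
    by (simp add: L_def hY(4) hZ(4) hA(4) hB(4) hC(4) hS(4))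
qed

end
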